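(* Let $n\ge 4$, $N=\{1,\dots,n\}$, fix distinct $i_1,i_2\in N$ and let $\hat N^c=N\setminus\{i_1,i_2\}$. Then the inequality $$x_{i_1i_2}+\sum_{j\in\hat N^c}\left(x_{i_1j}+x_{ji_1}\right)-\sum_{j\in\hat N^c}x_{ji_2}-\sum_{j,j'\in\hat N^c:\,j\ne j'} x_{jj'}\le 2-\frac{(n-3)(n-4)}{2}$$ is a valid inequality for the weak order polytope $P^n_{WO}$, i.e. it holds for every point $x\in P^n_{WO}$.
   Context: Let $N=\{1,\dots,n\}$ and $A_N=\{(i,j): i,j\in N, i\ne j\}$. A weak order on $N$ is a binary relation $W\subseteq N\times N$ that is reflexive, transitive and total; $(i,j)\in W$ is read "$i$ is preferred over or tied with $j$". The characteristic vector of $W$ is $x^W\in\{0,1\}^{A_N}$ with $x^W_{(i,j)}=1$ if $(i,j)\in W$ and $0$ otherwise. The weak order polytope $P^n_{WO}$ is the convex hull of the characteristic vectors of all weak orders on $N$; its points are vectors $x\in\mathbb{R}^{A_N}$ and $x_{ij}$ denotes the coordinate $x_{(i,j)}$. *)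

theory Defs
  imports "HOL-Analysis.Analysis"
begin

definition arcs :: "nat \<Rightarrow> (nat \<times> nat) set" where
  "arcs n = {(i, j). i \<in> {1..n} \<and> j \<in> {1..n} \<and> i \<noteq> j}"

definition weak_order :: "nat \<Rightarrow> (nat \<times> nat) set \<Rightarrow> bool" where
  "weak_order n W \<longleftrightarrow>
     W \<subseteq> {1..n} \<times> {1..n} \<and>
     (\<forall>i\<in>{1..n}. (i, i) \<in> W) \<and>
     (\<forall>i j k. (i, j) \<in> W \<longrightarrow> (j, k) \<in> W \<longrightarrow> (i, k) \<in> W) \<and>
     (\<forall>i\<in>{1..n}. \<forall>j\<in>{1..n}. (i, j) \<in> W \<or> (j, i) \<in> W)"

text \<open>Characteristic vector in R^{A_N}; represented as a function on nat \<times> nat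
  which is 0 outside A_N (only coordinates in A_N are meaningful).\<close>

definition charvec :: "nat \<Rightarrow> (nat \<times> nat) set \<Rightarrow> (nat \<times> nat) \<Rightarrow> real" where
  "charvec n W a = (if a \<in> arcs n \<and> a \<in> W then 1 else 0)"

text \<open>The weak order polytope: convex hull of the characteristic vectors, i.e. the set of
  convex combinations of finitely many of them (there are finitely many weak orders).
  A point is a vector in R^{A_N}, given by its coordinates on A_N.\<close>

definition weak_order_polytope :: "nat \<Rightarrow> ((nat \<times> nat) \<Rightarrow> real) set" where
  "weak_order_polytope n =
     {x. \<exists>c :: (nat \<times> nat) set \<Rightarrow> real.
           (\<forall>W. 0 \<le> c W) \<and>
           (\<Sum>W\<in>{W. weak_order n W}. c W) = 1 \<and>
           (\<forall>a\<in>arcs n. x a = (\<Sum>W\<in>{W. weak_order n W}. c W * charvec n W a))}"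

end

theory Submission
  imports Defs
begin

text \<open>On the characteristic vector of a weak order W, put M = N - {i1, i2}, m = |M|, let T be the
  set of j \<in> M tied with i1 and t = |T|, and let a = x_{i1 i2} \<in> {0, 1}. Totality makes the
  second sum equal to m + t. If a = 1, transitivity gives j \<succeq> i2 for every j \<in> T, so the
  third sum is at least a t. Every pair of distinct elements of M contributes at least 1 to the
  last sum and every pair inside T contributes 2, so that sum is at least (m(m-1) + t(t-1))/2.
  Hence the left-hand side is at most 2 - (m-1)(m-2)/2 - ((t-1)(t-2)/2 + a(t-1)), and the
  bracket is nonnegative for integers t. A linear inequality valid at the vertices is valid on
  their convex hull.\<close>

lemma finite_weak_orders: "finite {W. weak_order n W}"
proof (rule finite_subset)
  show "{W. weak_order n W} \<subseteq> Pow ({1..n} \<times> {1..n})" by (auto simp: weak_order_def)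
qed simp

lemma valid_on_weak_order_polytope:
  fixes L :: "((nat \<times> nat) \<Rightarrow> real) \<Rightarrow> real"
  assumes x: "x \<in> weak_order_polytope n"
    and L_local: "\<And>x y. (\<And>a. a \<in> arcs n \<Longrightarrow> x a = y a) \<Longrightarrow> L x = L y"
    and L_sum: "\<And>(S :: (nat \<times> nat) set set) c v. finite S \<Longrightarrow>
                  L (\<lambda>a. \<Sum>W\<in>S. c W * v W a) = (\<Sum>W\<in>S. c W * L (v W))"
    and vertex: "\<And>W. weak_order n W \<Longrightarrow> L (charvec n W) \<le> b"
  shows "L x \<le> b"
proof -
  let ?S = "{W. weak_order n W}"
  obtain c where c_nonneg: "\<forall>W. 0 \<le> c W" and c_sum: "(\<Sum>W\<in>?S. c W) = 1"
    and x_eq: "\<forall>a\<in>arcs n. x a = (\<Sum>W\<in>?S. c W * charvec n W a)"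
    using x unfolding weak_order_polytope_def by blast
  have "L x = L (\<lambda>a. \<Sum>W\<in>?S. c W * charvec n W a)"
    using x_eq by (intro L_local) blast
  also have "\<dots> = (\<Sum>W\<in>?S. c W * L (charvec n W))"
    by (rule L_sum[OF finite_weak_orders])
  also have "\<dots> \<le> (\<Sum>W\<in>?S. c W * b)"
    using vertex c_nonneg by (intro sum_mono mult_left_mono) auto
  also have "\<dots> = b"
    using c_sum by (simp add: sum_distrib_right[symmetric])
  finally show ?thesis .
qed

definition off_diag :: "'a set \<Rightarrow> ('a \<times> 'a) set" where
  "off_diag S = {(j, j'). j \<in> S \<and> j' \<in> S \<and> j \<noteq> j'}"

lemma finite_off_diag: "finite S \<Longrightarrow> finite (off_diag S)"
  by (rule finite_subset[of _ "S \<times> S"]) (auto simp: off_diag_def)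

lemma card_off_diag:
  assumes "finite S"
  shows "card (off_diag S) = card S * card S - card S"
proof -
  have "off_diag S = S \<times> S - (\<lambda>j. (j, j)) ` S" by (auto simp: off_diag_def)
  moreover have "card ((\<lambda>j. (j, j)) ` S) = card S" by (rule card_image) (auto simp: inj_on_def)
  ultimately show ?thesis
    using assms by (simp add: card_Diff_subset card_cartesian_product image_subset_iff)
qed

lemma sum_if_two_one:
  assumes "finite A"
  shows "(\<Sum>a\<in>A. if P a then 2 else 1 :: real) = real (card A) + real (card {a\<in>A. P a})"
proof -
  have "(\<Sum>a\<in>A. if P a then 2 else 1 :: real) = (\<Sum>a\<in>A. 1 + (if P a then 1 else 0))"
    by (intro sum.cong) auto
  also have "\<dots> = real (card A) + real (card {a\<in>A. P a})"
    using assms by (simp add: sum.distrib sum.If_cases Int_def conj_commute)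
  finally show ?thesis .
qed

lemma charvec_add_swap:
  assumes "weak_order n W" and "(i, j) \<in> arcs n"
  shows "charvec n W (i, j) + charvec n W (j, i) = (if (i, j) \<in> W \<and> (j, i) \<in> W then 2 else 1)"
proof -
  have "(j, i) \<in> arcs n" using assms(2) by (auto simp: arcs_def)
  moreover have "(i, j) \<in> W \<or> (j, i) \<in> W"
    using assms unfolding weak_order_def arcs_def by blast
  ultimately show ?thesis using assms(2) by (auto simp: charvec_def)
qed

lemma sum_charvec_both_directions:
  assumes "weak_order n W" and "i \<in> {1..n}" and "M \<subseteq> {1..n} - {i}"
  shows "(\<Sum>j\<in>M. charvec n W (i, j) + charvec n W (j, i))
           = real (card M) + real (card {j\<in>M. (i, j) \<in> W \<and> (j, i) \<in> W})"
proof -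
  have "finite M" using assms(3) finite_subset by blast
  have "(\<Sum>j\<in>M. charvec n W (i, j) + charvec n W (j, i))
          = (\<Sum>j\<in>M. if (i, j) \<in> W \<and> (j, i) \<in> W then 2 else 1)"
    using assms by (intro sum.cong refl charvec_add_swap) (auto simp: arcs_def)
  then show ?thesis using sum_if_two_one[OF \<open>finite M\<close>] by simp
qed

lemma sum_charvec_off_diag:
  assumes "weak_order n W" and "S \<subseteq> {1..n}"
  shows "2 * (\<Sum>p\<in>off_diag S. charvec n W p)
           = real (card (off_diag S)) + real (card {p\<in>off_diag S. p \<in> W \<and> prod.swap p \<in> W})"
proof -
  let ?P = "off_diag S"
  have "finite ?P" using assms(2) finite_off_diag finite_subset by blast
  have "prod.swap ` ?P = ?P" by (auto simp: off_diag_def image_iff)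
  then have "(\<Sum>p\<in>?P. charvec n W p) = (\<Sum>p\<in>prod.swap ` ?P. charvec n W p)"
    by simp
  also have "\<dots> = (\<Sum>p\<in>?P. charvec n W (prod.swap p))"
    by (subst sum.reindex) (auto simp: inj_on_def)
  finally have "2 * (\<Sum>p\<in>?P. charvec n W p) = (\<Sum>p\<in>?P. charvec n W p + charvec n W (prod.swap p))"
    by (simp add: sum.distrib)
  also have "\<dots> = (\<Sum>p\<in>?P. if p \<in> W \<and> prod.swap p \<in> W then 2 else 1)"
  proof (rule sum.cong)
    fix p assume "p \<in> ?P"
    obtain j j' where p: "p = (j, j')" by (cases p)
    with \<open>p \<in> ?P\<close> assms(2) have "(j, j') \<in> arcs n" by (auto simp: off_diag_def arcs_def)
    with p show "charvec n W p + charvec n W (prod.swap p)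
                 = (if p \<in> W \<and> prod.swap p \<in> W then 2 else 1)"
      using charvec_add_swap[OF assms(1)] by simp
  qed simp
  also have "\<dots> = real (card ?P) + real (card {p\<in>?P. p \<in> W \<and> prod.swap p \<in> W})"
    by (rule sum_if_two_one[OF \<open>finite ?P\<close>])
  finally show ?thesis .
qed

lemma card_le_sum_charvec_above:
  assumes "weak_order n W" and "(i, k) \<in> W" and "k \<in> {1..n}" and "M \<subseteq> {1..n} - {k}"
  shows "real (card {j\<in>M. (j, i) \<in> W}) \<le> (\<Sum>j\<in>M. charvec n W (j, k))"
proof -
  let ?A = "{j\<in>M. (j, i) \<in> W}"
  have "finite M" using assms(4) finite_subset by blast
  have "real (card ?A) = (\<Sum>j\<in>?A. charvec n W (j, k))"
  proof -
    have "charvec n W (j, k) = 1" if "j \<in> ?A" for j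
    proof -
      have "(j, k) \<in> W" using that assms(1,2) unfolding weak_order_def by blast
      moreover have "(j, k) \<in> arcs n" using that assms(3,4) by (auto simp: arcs_def)
      ultimately show ?thesis by (simp add: charvec_def)
    qed
    then show ?thesis by simp
  qed
  also have "\<dots> \<le> (\<Sum>j\<in>M. charvec n W (j, k))"
    using \<open>finite M\<close> by (intro sum_mono2) (auto simp: charvec_def)
  finally show ?thesis .
qed

lemma vertex_bound_arith:
  fixes a m :: real and t :: nat
  assumes "a = 0 \<or> a = 1"
  shows "a + (m + t) - a * t - ((m * m - m) + (real t * real t - real t)) / 2
           \<le> 2 - (m - 1) * (m - 2) / 2"
proof -
  have gap: "2 - (m - 1) * (m - 2) / 2
      - (a + (m + t) - a * t - ((m * m - m) + (real t * real t - real t)) / 2)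
      = ((real t - 1) * (real t - 2) + 2 * a * (real t - 1)) / 2"
    by (simp add: field_simps)
  have "(real t - 1) * (real t - 2) \<ge> 0"
  proof (cases "t \<le> 1")
    case True
    then have "t = 0 \<or> t = 1" by auto
    then show ?thesis by auto
  qed (auto intro: mult_nonneg_nonneg)
  moreover have "(real t - 1) * (real t - 2) + 2 * (real t - 1) = real t * (real t - 1)"
    by (simp add: algebra_simps)
  moreover have "real t * (real t - 1) \<ge> 0" by (cases t) auto
  ultimately have "(real t - 1) * (real t - 2) + 2 * a * (real t - 1) \<ge> 0"
    using assms by auto
  then have "0 \<le> 2 - (m - 1) * (m - 2) / 2
      - (a + (m + t) - a * t - ((m * m - m) + (real t * real t - real t)) / 2)"
    unfolding gap by simp
  then show ?thesis by simp
qed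

definition ineq_lhs :: "nat \<Rightarrow> nat \<Rightarrow> nat \<Rightarrow> ((nat \<times> nat) \<Rightarrow> real) \<Rightarrow> real" where
  "ineq_lhs n i1 i2 x = x (i1, i2)
     + (\<Sum>j\<in>{1..n} - {i1, i2}. x (i1, j) + x (j, i1))
     - (\<Sum>j\<in>{1..n} - {i1, i2}. x (j, i2))
     - (\<Sum>p\<in>off_diag ({1..n} - {i1, i2}). x p)"

lemma ineq_lhs_cong:
  assumes "\<And>a. a \<in> arcs n \<Longrightarrow> x a = y a" and "i1 \<in> {1..n}" "i2 \<in> {1..n}" "i1 \<noteq> i2"
  shows "ineq_lhs n i1 i2 x = ineq_lhs n i1 i2 y"
  unfolding ineq_lhs_def using assms
  by (intro arg_cong2[where f = "(-)"] arg_cong2[where f = "(+)"] sum.cong refl)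
     (auto simp: arcs_def off_diag_def)

lemma ineq_lhs_sum:
  assumes "finite S"
  shows "ineq_lhs n i1 i2 (\<lambda>a. \<Sum>W\<in>S. c W * v W a) = (\<Sum>W\<in>S. c W * ineq_lhs n i1 i2 (v W))"
  unfolding ineq_lhs_def
  by (simp add: sum_distrib_left sum_subtractf sum.distrib sum.swap[of _ S] algebra_simps)

lemma ineq_lhs_charvec_le:
  assumes W: "weak_order n W" and "n \<ge> 4"
    and i: "i1 \<in> {1..n}" "i2 \<in> {1..n}" "i1 \<noteq> i2"
  shows "ineq_lhs n i1 i2 (charvec n W) \<le> 2 - real ((n - 3) * (n - 4)) / 2"
proof -
  define r where "r = charvec n W"
  define M where "M = {1..n} - {i1, i2}"
  define T where "T = {j\<in>M. (i1, j) \<in> W \<and> (j, i1) \<in> W}"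
  define a :: real where "a = (if (i1, i2) \<in> W then 1 else 0)"
  define m where "m = card M"
  define t where "t = card T"
  have M_sub: "M \<subseteq> {1..n} - {i1}" "M \<subseteq> {1..n} - {i2}" "M \<subseteq> {1..n}" by (auto simp: M_def)
  have "finite M" "T \<subseteq> M" by (auto simp: M_def T_def)
  have "finite T" using finite_subset[OF \<open>T \<subseteq> M\<close> \<open>finite M\<close>] .
  have m: "n = m + 2" using i \<open>n \<ge> 4\<close> by (simp add: m_def M_def card_Diff_subset)
  have lhs: "ineq_lhs n i1 i2 r
      = a + (\<Sum>j\<in>M. r (i1, j) + r (j, i1)) - (\<Sum>j\<in>M. r (j, i2)) - (\<Sum>p\<in>off_diag M. r p)"
    using i by (simp add: ineq_lhs_def M_def r_def a_def charvec_def arcs_def)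
  have both: "(\<Sum>j\<in>M. r (i1, j) + r (j, i1)) = real m + real t"
    unfolding r_def m_def t_def T_def by (rule sum_charvec_both_directions[OF W i(1) M_sub(1)])
  have to_i2: "a * t \<le> (\<Sum>j\<in>M. r (j, i2))"
  proof (cases "(i1, i2) \<in> W")
    case True
    have "card T \<le> card {j\<in>M. (j, i1) \<in> W}"
      using \<open>finite M\<close> by (intro card_mono) (auto simp: T_def)
    then show ?thesis
      using card_le_sum_charvec_above[OF W True i(2) M_sub(2)]
      by (simp add: a_def t_def r_def True)
  next
    case False
    then show ?thesis by (simp add: a_def r_def charvec_def sum_nonneg)
  qed
  have pairs:
    "((real m * real m - real m) + (real t * real t - real t)) / 2 \<le> (\<Sum>p\<in>off_diag M. r p)"
  proof -
    have trans: "(u, w) \<in> W" if "(u, v) \<in> W" "(v, w) \<in> W" for u v w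
      using W that unfolding weak_order_def by blast
    have "(j, j') \<in> W \<and> (j', j) \<in> W" if "j \<in> T" "j' \<in> T" for j j'
      using that trans[of j i1 j'] trans[of j' i1 j] by (simp add: T_def)
    then have "off_diag T \<subseteq> {p\<in>off_diag M. p \<in> W \<and> prod.swap p \<in> W}"
      using \<open>T \<subseteq> M\<close> by (auto simp: off_diag_def)
    then have "card (off_diag T) \<le> card {p\<in>off_diag M. p \<in> W \<and> prod.swap p \<in> W}"
      using \<open>finite M\<close> by (intro card_mono) (auto intro: finite_subset[OF _ finite_off_diag])
    then have "real (card (off_diag M)) + real (card (off_diag T)) \<le> 2 * (\<Sum>p\<in>off_diag M. r p)"
      using sum_charvec_off_diag[OF W M_sub(3)] by (simp add: r_def)
    moreover have "real (card (off_diag S)) = real (card S) * card S - card S"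
      if "finite S" for S :: "nat set"
      using card_off_diag[OF that] by (simp add: of_nat_diff)
    ultimately show ?thesis
      using \<open>finite M\<close> \<open>finite T\<close> by (simp add: m_def t_def)
  qed
  have rhs: "real ((n - 3) * (n - 4)) = (real m - 1) * (real m - 2)"
    using m \<open>n \<ge> 4\<close> by (simp add: of_nat_diff)
  have "ineq_lhs n i1 i2 r
      \<le> a + (real m + real t) - a * t - ((real m * real m - real m) + (real t * real t - real t)) / 2"
    using lhs both to_i2 pairs by linarith
  also have "\<dots> \<le> 2 - (real m - 1) * (real m - 2) / 2"
    by (rule vertex_bound_arith) (simp add: a_def)
  finally show ?thesis unfolding r_def rhs .
qed

theorem mainTheorem3:
  fixes n i1 i2 :: nat and x :: "(nat \<times> nat) \<Rightarrow> real"
  assumes "n \<ge> 4"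
    and "i1 \<in> {1..n}" and "i2 \<in> {1..n}" and "i1 \<noteq> i2"
    and "x \<in> weak_order_polytope n"
  shows "x (i1, i2)
           + (\<Sum>j\<in>{1..n} - {i1, i2}. x (i1, j) + x (j, i1))
           - (\<Sum>j\<in>{1..n} - {i1, i2}. x (j, i2))
           - (\<Sum>(j, j')\<in>{(j, j'). j \<in> {1..n} - {i1, i2} \<and> j' \<in> {1..n} - {i1, i2} \<and> j \<noteq> j'}. x (j, j'))
         \<le> 2 - real ((n - 3) * (n - 4)) / 2"
proof -
  have "ineq_lhs n i1 i2 x \<le> 2 - real ((n - 3) * (n - 4)) / 2"
    using assms(5)
  proof (rule valid_on_weak_order_polytope[where L = "ineq_lhs n i1 i2"])
    fix y z :: "nat \<times> nat \<Rightarrow> real"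
    assume "\<And>a. a \<in> arcs n \<Longrightarrow> y a = z a"
    then show "ineq_lhs n i1 i2 y = ineq_lhs n i1 i2 z"
      using assms(2-4) by (rule ineq_lhs_cong)
  next
    fix S :: "(nat \<times> nat) set set" and c v
    assume "finite S"
    then show "ineq_lhs n i1 i2 (\<lambda>a. \<Sum>W\<in>S. c W * v W a)
                 = (\<Sum>W\<in>S. c W * ineq_lhs n i1 i2 (v W))"
      by (rule ineq_lhs_sum)
  next
    fix W assume "weak_order n W"
    then show "ineq_lhs n i1 i2 (charvec n W) \<le> 2 - real ((n - 3) * (n - 4)) / 2"
      using assms(1-4) by (rule ineq_lhs_charvec_le)
  qed
  then show ?thesis by (simp add: ineq_lhs_def off_diag_def case_prod_unfold)
qed

end
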